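(* Let $G$ be a graph with $N$ vertices and maximum degree $\Delta$, and let $R_{\max}$ be a positive integer. For each vertex subset $X$ with $\mathrm{diam}(X)\le R_{\max}$, let $h_X$ be an operator supported in $X$ (possibly zero, not necessarily Hermitian) with $h_X|W\rangle=h_X|\overline 0\rangle=0$. If for some $p\in\{0,\dots,N\}$ with $p\le N/(\Delta^{2R_{\max}}+1)$ one has $\left(\sum_{X:\mathrm{diam}(X)\le R_{\max}}h_X\right)|W^p\rangle=E'_p|W^p\rangle$ with $E'_p\in\mathbb{C}$, then $E'_p=0$.
   Context: System of $N$ qubits on the vertices of a graph $G$ with local basis $|0\rangle,|1\rangle$; $s_i^\dagger$ acts on vertex $i$ as $s^\dagger|0\rangle=|1\rangle$, $s^\dagger|1\rangle=0$; $|\overline 0\rangle=|0\rangle^{\otimes N}$. Distances are graph distances; for a vertex set $X$, $\mathrm{diam}(X)=1+\max_{i,j\in X}(\text{graph distance between }i,j)$. An operator is supported in $X$ if it acts as the identity outside $X$. $S^\dagger=\sum_i s_i^\dagger$; for $p=0,\dots,N$, $|W^p\rangle$ is the normalization of $(S^\dagger)^p|\overline 0\rangle$ (the equal-weight superposition of all basis states with exactly $p$ vertices in state $|1\rangle$), and $|W\rangle=|W^1\rangle$. *)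

theory Defs
  imports Complex_Main "HOL-Library.Extended_Nat"
begin

definition simple_graph :: "'a set \<Rightarrow> ('a \<Rightarrow> 'a \<Rightarrow> bool) \<Rightarrow> bool" where
  "simple_graph V E \<longleftrightarrow> finite V \<and> (\<forall>i j. E i j \<longrightarrow> i \<in> V \<and> j \<in> V)
     \<and> (\<forall>i j. E i j \<longrightarrow> E j i) \<and> (\<forall>i. \<not> E i i)"

definition max_degree :: "'a set \<Rightarrow> ('a \<Rightarrow> 'a \<Rightarrow> bool) \<Rightarrow> nat" where
  "max_degree V E = Max (insert 0 ((\<lambda>i. card {j \<in> V. E i j}) ` V))"

definition walk :: "('a \<Rightarrow> 'a \<Rightarrow> bool) \<Rightarrow> nat \<Rightarrow> 'a \<Rightarrow> 'a \<Rightarrow> bool" where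
  "walk E n i j \<longleftrightarrow> (\<exists>f :: nat \<Rightarrow> 'a. f 0 = i \<and> f n = j \<and> (\<forall>k<n. E (f k) (f (Suc k))))"

text \<open>Graph distance (infinite if no path).\<close>
definition gdist :: "('a \<Rightarrow> 'a \<Rightarrow> bool) \<Rightarrow> 'a \<Rightarrow> 'a \<Rightarrow> enat" where
  "gdist E i j = (INF n \<in> {n. walk E n i j}. enat n)"

definition diam :: "('a \<Rightarrow> 'a \<Rightarrow> bool) \<Rightarrow> 'a set \<Rightarrow> enat" where
  "diam E X = 1 + (SUP ij \<in> X \<times> X. gdist E (fst ij) (snd ij))"

text \<open>States: functions on the computational basis, a basis state being identified with
  the set of vertices in state |1>. Operators: matrices indexed by basis states.\<close>
type_synonym 'a state = "'a set \<Rightarrow> complex"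
type_synonym 'a op = "'a set \<Rightarrow> 'a set \<Rightarrow> complex"

definition op_apply :: "'a set \<Rightarrow> 'a op \<Rightarrow> 'a state \<Rightarrow> 'a state" where
  "op_apply V H \<psi> = (\<lambda>S. \<Sum>T\<in>Pow V. H S T * \<psi> T)"

text \<open>H acts as identity outside X, i.e. H = A_X \<otimes> 1.\<close>
definition supported_in :: "'a set \<Rightarrow> 'a set \<Rightarrow> 'a op \<Rightarrow> bool" where
  "supported_in V X H \<longleftrightarrow> (\<exists>A :: 'a op. \<forall>S \<in> Pow V. \<forall>T \<in> Pow V.
      H S T = (if S - X = T - X then A (S \<inter> X) (T \<inter> X) else 0))"

definition zero_state :: "'a state" where
  "zero_state = (\<lambda>S. if S = {} then 1 else 0)"

definition Wp :: "'a set \<Rightarrow> nat \<Rightarrow> 'a state" where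
  "Wp V p = (\<lambda>S. if card S = p then complex_of_real (1 / sqrt (real (card V choose p))) else 0)"

end

theory Submission
  imports Defs
begin

text \<open>Choose p vertices so far apart that no set of diameter at most Rmax contains two of them;
  a greedy choice succeeds because a ball of radius Rmax contains at most \<Delta>^Rmax + 1 vertices.
  Let S be the basis state with excitations exactly at these vertices. Since h_X is supported
  in X, the component of h_X|W^p> at S only depends on |W^p> on the basis states that agree with
  S outside X; there |W^p> is a multiple of |0> or of |W> on X, because S \<inter> X has at most one
  element. Hence every h_X|W^p> vanishes at S, so E' times the nonzero amplitude of |W^p> at S
  is 0.\<close>

lemma walk_0_iff [simp]: "walk E 0 i j \<longleftrightarrow> i = j"
  unfolding walk_def by auto

lemma walk_Suc_iff: "walk E (Suc k) i j \<longleftrightarrow> (\<exists>l. walk E k i l \<and> E l j)"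
proof
  assume "walk E (Suc k) i j"
  then obtain f where f: "f 0 = i" "f (Suc k) = j" "\<forall>m<Suc k. E (f m) (f (Suc m))"
    unfolding walk_def by blast
  then have "walk E k i (f k)" unfolding walk_def by auto
  with f show "\<exists>l. walk E k i l \<and> E l j" by auto
next
  assume "\<exists>l. walk E k i l \<and> E l j"
  then obtain f where f: "f 0 = i" "\<forall>m<k. E (f m) (f (Suc m))" "E (f k) j"
    unfolding walk_def by blast
  have "\<forall>m<Suc k. E ((f(Suc k := j)) m) ((f(Suc k := j)) (Suc m))"
    using f(2,3) less_Suc_eq by auto
  with f(1) show "walk E (Suc k) i j"
    unfolding walk_def by (intro exI[of _ "f(Suc k := j)"]) auto
qed

lemma walk_target_in_vertices:
  assumes "simple_graph V E" "i \<in> V" "walk E k i j"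
  shows "j \<in> V"
  using assms(3)
proof (cases k)
  case (Suc k')
  with assms(1,3) show ?thesis unfolding simple_graph_def by (auto simp: walk_Suc_iff)
qed (use assms(2) in simp)

lemma card_neighbours_le_max_degree:
  assumes "simple_graph V E" "i \<in> V"
  shows "card {j \<in> V. E i j} \<le> max_degree V E"
  using assms unfolding simple_graph_def max_degree_def by (intro Max_ge) auto

lemma card_walk_targets_le:
  assumes g: "simple_graph V E" and i: "i \<in> V"
  shows "card {j. walk E k i j} \<le> max_degree V E ^ k"
proof (induction k)
  case (Suc k)
  let ?N = "{j. walk E k i j}"
  have sub: "?N \<subseteq> V" using walk_target_in_vertices[OF g i] by blast
  then have fin: "finite ?N" using g finite_subset unfolding simple_graph_def by blast
  have "{j. walk E (Suc k) i j} = (\<Union>l\<in>?N. {j \<in> V. E l j})"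
    using g unfolding simple_graph_def by (auto simp: walk_Suc_iff)
  then have "card {j. walk E (Suc k) i j} \<le> (\<Sum>l\<in>?N. card {j \<in> V. E l j})"
    using card_UN_le[OF fin] by simp
  also have "\<dots> \<le> (\<Sum>l\<in>?N. max_degree V E)"
    using sub by (intro sum_mono card_neighbours_le_max_degree[OF g]) blast
  also have "\<dots> \<le> max_degree V E ^ k * max_degree V E" using Suc by simp
  finally show ?case by (simp add: mult.commute)
qed simp

text \<open>Every vertex has at most one neighbour, so a walk can only go back and forth along one
  edge.\<close>
lemma walk_target_if_max_degree_le_1:
  assumes g: "simple_graph V E" and i: "i \<in> V" and d: "max_degree V E \<le> 1"
    and "walk E k i j"
  shows "j = i \<or> E i j"
  using assms(4)
proof (induction k arbitrary: j)
  case (Suc k)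
  then obtain l where l: "walk E k i l" "E l j" by (auto simp: walk_Suc_iff)
  from Suc.IH[OF l(1)] show ?case
  proof
    assume "E i l"
    then have "l \<in> V" "{i, j} \<subseteq> {m \<in> V. E l m}"
      using g l(2) i unfolding simple_graph_def by auto
    moreover have "finite {m \<in> V. E l m}" using g unfolding simple_graph_def by auto
    ultimately have "card {i, j} \<le> 1"
      using card_mono card_neighbours_le_max_degree[OF g] d by (meson le_trans)
    then show ?case by (cases "i = j") auto
  qed (use l(2) in simp)
qed simp

lemma geometric_sum_less_power:
  fixes d :: nat
  assumes "d \<ge> 2"
  shows "(\<Sum>k<n. d ^ k) < d ^ n"
proof (induction n)
  case (Suc n)
  then have "(\<Sum>k<Suc n. d ^ k) < 2 * d ^ n" by simp
  also have "\<dots> \<le> d ^ Suc n" using assms by simp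
  finally show ?case .
qed simp

lemma nat_mult_le_if_le_divide:
  fixes p N d k :: nat
  assumes "real p \<le> real N / (real d ^ k + 1)"
  shows "p * (d ^ k + 1) \<le> N"
proof -
  have "0 < real d ^ k + 1" by (intro add_nonneg_pos) simp_all
  with assms have "real p * (real d ^ k + 1) \<le> real N"
    by (simp only: pos_le_divide_eq)
  then have "real (p * (d ^ k + 1)) \<le> real N" by (simp add: ring_distribs)
  then show ?thesis by (simp only: of_nat_le_iff)
qed

text \<open>Walks of length less than R, matching the convention diam X = 1 + max distance.\<close>
definition graph_ball :: "('a \<Rightarrow> 'a \<Rightarrow> bool) \<Rightarrow> nat \<Rightarrow> 'a \<Rightarrow> 'a set" where
  "graph_ball E R i = {j. \<exists>n<R. walk E n i j}"

lemma graph_ball_subset: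
  "simple_graph V E \<Longrightarrow> i \<in> V \<Longrightarrow> graph_ball E R i \<subseteq> V"
  unfolding graph_ball_def using walk_target_in_vertices[of V E i] by blast

lemma center_in_graph_ball: "R > 0 \<Longrightarrow> i \<in> graph_ball E R i"
  unfolding graph_ball_def by auto

lemma card_graph_ball_le:
  assumes g: "simple_graph V E" and i: "i \<in> V" and R: "R > 0"
  shows "card (graph_ball E R i) \<le> max_degree V E ^ R + 1"
proof (cases "max_degree V E \<le> 1")
  case True
  have fin: "finite {j \<in> V. E i j}" using g unfolding simple_graph_def by auto
  have "graph_ball E R i \<subseteq> insert i {j \<in> V. E i j}"
    using walk_target_if_max_degree_le_1[OF g i True] g
    unfolding graph_ball_def simple_graph_def by blast
  then have "card (graph_ball E R i) \<le> card (insert i {j \<in> V. E i j})"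
    using fin by (intro card_mono) auto
  also have "\<dots> \<le> card {j \<in> V. E i j} + 1" by (simp add: card_insert_if fin)
  also have "\<dots> \<le> max_degree V E + 1" using card_neighbours_le_max_degree[OF g i] by simp
  also have "max_degree V E = max_degree V E ^ R"
    using True R by (cases "max_degree V E") auto
  finally show ?thesis .
next
  case False
  have "graph_ball E R i = (\<Union>k<R. {j. walk E k i j})" unfolding graph_ball_def by auto
  then have "card (graph_ball E R i) \<le> (\<Sum>k<R. card {j. walk E k i j})"
    using card_UN_le[of "{..<R}"] by simp
  also have "\<dots> \<le> (\<Sum>k<R. max_degree V E ^ k)"
    by (intro sum_mono card_walk_targets_le[OF g i])
  also have "\<dots> < max_degree V E ^ R" using False by (intro geometric_sum_less_power) simp
  finally show ?thesis by simp
qed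

lemma mem_graph_ball_if_diam_le:
  assumes "i \<in> X" "j \<in> X" "diam E X \<le> enat R"
  shows "j \<in> graph_ball E R i"
proof -
  have "gdist E i j \<le> (SUP ij \<in> X \<times> X. gdist E (fst ij) (snd ij))"
    using assms by (intro SUP_upper2[of "(i, j)"]) auto
  then have "1 + gdist E i j \<le> enat R"
    using assms(3) unfolding diam_def by (meson add_left_mono order_trans)
  then have "gdist E i j < enat R"
    by (cases "gdist E i j") (auto simp: one_enat_def)
  then show ?thesis
    unfolding gdist_def graph_ball_def by (auto simp: INF_less_iff)
qed

text \<open>Greedy selection: each chosen vertex excludes at most b candidates.\<close>
lemma exists_scattered_subset:
  assumes fin: "finite V" and b: "b > 0"
    and B: "\<And>i. i \<in> V \<Longrightarrow> i \<in> B i \<and> B i \<subseteq> V \<and> card (B i) \<le> b"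
    and m: "m * b \<le> card V"
  shows "\<exists>S \<subseteq> V. card S = m \<and> (\<forall>i\<in>S. \<forall>j\<in>S. j \<in> B i \<and> i \<in> B j \<longrightarrow> i = j)"
  using m
proof (induction m)
  case 0
  show ?case by (intro exI[of _ "{}"]) auto
next
  case (Suc m)
  then obtain S where S: "S \<subseteq> V" "card S = m"
      "\<forall>i\<in>S. \<forall>j\<in>S. j \<in> B i \<and> i \<in> B j \<longrightarrow> i = j"
    by auto
  let ?U = "\<Union>i\<in>S. B i"
  have finS: "finite S" using S(1) fin finite_subset by blast
  have "card ?U \<le> (\<Sum>i\<in>S. card (B i))" using card_UN_le[OF finS] .
  also have "\<dots> \<le> m * b" using S(1,2) B sum_mono[of S "\<lambda>i. card (B i)" "\<lambda>_. b"] by auto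
  also have "\<dots> < card V" using Suc.prems b by simp
  finally have "?U \<noteq> V" by blast
  moreover have "?U \<subseteq> V" using B S(1) by blast
  ultimately obtain v where v: "v \<in> V" "v \<notin> ?U" by blast
  then have "v \<notin> S" using B S(1) by blast
  with S v finS show ?case by (intro exI[of _ "insert v S"]) auto
qed

lemma exists_sparse_vertex_set:
  assumes graph: "simple_graph V E" and R: "R > 0"
    and p: "p * (max_degree V E ^ R + 1) \<le> card V"
  shows "\<exists>S \<subseteq> V. card S = p \<and> (\<forall>X. diam E X \<le> enat R \<longrightarrow> card (S \<inter> X) \<le> 1)"
proof -
  have fV: "finite V" using graph unfolding simple_graph_def by auto
  have balls: "i \<in> graph_ball E R i \<and> graph_ball E R i \<subseteq> V \<and>
      card (graph_ball E R i) \<le> max_degree V E ^ R + 1" if "i \<in> V" for i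
    using center_in_graph_ball[OF R, of i E] graph_ball_subset[OF graph that, of R]
      card_graph_ball_le[OF graph that R] by blast
  have "\<exists>S \<subseteq> V. card S = p \<and>
      (\<forall>i\<in>S. \<forall>j\<in>S. j \<in> graph_ball E R i \<and> i \<in> graph_ball E R j \<longrightarrow> i = j)"
    by (rule exists_scattered_subset[OF fV _ balls p]) simp
  then obtain S where S: "S \<subseteq> V" "card S = p" and scattered:
      "\<forall>i\<in>S. \<forall>j\<in>S. j \<in> graph_ball E R i \<and> i \<in> graph_ball E R j \<longrightarrow> i = j"
    by blast
  have "card (S \<inter> X) \<le> 1" if "diam E X \<le> enat R" for X
  proof -
    have fin: "finite (S \<inter> X)" using fV S(1) finite_subset by blast
    show ?thesis
      unfolding One_nat_def card_le_Suc0_iff_eq[OF fin]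
      using scattered mem_graph_ball_if_diam_le[OF _ _ that] by blast
  qed
  with S show ?thesis by blast
qed

lemma op_apply_scale: "op_apply V H (\<lambda>T. c * \<psi> T) S = c * op_apply V H \<psi> S"
  unfolding op_apply_def by (simp add: sum_distrib_left algebra_simps)

lemma op_apply_supported_in:
  assumes fV: "finite V" and X: "X \<subseteq> V" and sup: "supported_in V X H" and S: "S \<subseteq> V"
    and \<psi>: "\<And>T. T \<subseteq> V \<Longrightarrow> T - X = S - X \<Longrightarrow> \<psi> T = \<phi> (T \<inter> X)"
  shows "op_apply V H \<psi> S = op_apply V H \<phi> (S \<inter> X)"
proof -
  obtain A where A: "\<forall>S \<in> Pow V. \<forall>T \<in> Pow V.
      H S T = (if S - X = T - X then A (S \<inter> X) (T \<inter> X) else 0)"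
    using sup unfolding supported_in_def by blast
  have "op_apply V H \<psi> S =
      (\<Sum>T\<in>Pow V. if T - X = S - X then A (S \<inter> X) (T \<inter> X) * \<phi> (T \<inter> X) else 0)"
    unfolding op_apply_def using A S \<psi> by (intro sum.cong) auto
  also have "\<dots> = (\<Sum>T\<in>{T\<in>Pow V. T - X = S - X}. A (S \<inter> X) (T \<inter> X) * \<phi> (T \<inter> X))"
    by (rule sum.inter_filter[symmetric]) (use fV in simp)
  also have "\<dots> = (\<Sum>U\<in>Pow X. A (S \<inter> X) U * \<phi> U)"
    by (rule sum.reindex_bij_witness[where i = "\<lambda>U. U \<union> (S - X)" and j = "\<lambda>T. T \<inter> X"])
       (use X S in auto)
  also have "Pow X = {T\<in>Pow V. T \<subseteq> X}" using X by blast
  also have "(\<Sum>T\<in>{T\<in>Pow V. T \<subseteq> X}. A (S \<inter> X) T * \<phi> T) =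
      (\<Sum>T\<in>Pow V. if T \<subseteq> X then A (S \<inter> X) T * \<phi> T else 0)"
    by (rule sum.inter_filter) (use fV in simp)
  also have "\<dots> = op_apply V H \<phi> (S \<inter> X)"
    unfolding op_apply_def
  proof (rule sum.cong[OF refl])
    fix T assume "T \<in> Pow V"
    moreover have "S \<inter> X \<in> Pow V" using S by blast
    ultimately have "H (S \<inter> X) T = (if {} = T - X then A (S \<inter> X) (T \<inter> X) else 0)"
      using A by auto
    then have "H (S \<inter> X) T = (if T \<subseteq> X then A (S \<inter> X) T else 0)"
      by (auto simp: Int_absorb2)
    then show "(if T \<subseteq> X then A (S \<inter> X) T * \<phi> T else 0) = H (S \<inter> X) T * \<phi> T"
      by simp
  qed
  finally show ?thesis .
qed

lemma Wp_on_coset: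
  assumes fV: "finite V" and S: "S \<subseteq> V" "card S = p" and T: "T \<subseteq> V" "T - X = S - X"
  shows "Wp V p T =
    Wp V p S / Wp V (card (S \<inter> X)) (S \<inter> X) * Wp V (card (S \<inter> X)) (T \<inter> X)"
proof -
  have fin: "finite S" "finite T" using S(1) T(1) fV finite_subset by auto
  have "card T = p \<longleftrightarrow> card (T \<inter> X) = card (S \<inter> X)"
    using card_Int_Diff[OF fin(1), of X] card_Int_Diff[OF fin(2), of X] S(2) T(2) by auto
  moreover have "card (S \<inter> X) \<le> card V"
    using fV S(1) by (meson card_mono inf.coboundedI1)
  ultimately show ?thesis unfolding Wp_def using S(2) by simp
qed

lemma op_apply_Wp_supported_in:
  assumes "finite V" "X \<subseteq> V" "supported_in V X H" "S \<subseteq> V" "card S = p"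
  shows "op_apply V H (Wp V p) S =
    Wp V p S / Wp V (card (S \<inter> X)) (S \<inter> X) * op_apply V H (Wp V (card (S \<inter> X))) (S \<inter> X)"
proof -
  let ?k = "card (S \<inter> X)"
  let ?c = "Wp V p S / Wp V ?k (S \<inter> X)"
  have "op_apply V H (Wp V p) S = op_apply V H (\<lambda>U. ?c * Wp V ?k U) (S \<inter> X)"
  proof (rule op_apply_supported_in[OF assms(1-4)])
    fix T assume "T \<subseteq> V" "T - X = S - X"
    then show "Wp V p T = ?c * Wp V ?k (T \<inter> X)" by (rule Wp_on_coset[OF assms(1,4,5)])
  qed
  then show ?thesis by (simp only: op_apply_scale)
qed

lemma op_apply_Wp_0: "finite V \<Longrightarrow> op_apply V H (Wp V 0) = op_apply V H zero_state"
  unfolding op_apply_def Wp_def zero_state_def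
  by (intro ext sum.cong) (auto dest: finite_subset)

lemma op_apply_Wp_eq_0_if_card_Int_le_1:
  assumes fV: "finite V" and X: "X \<subseteq> V" "supported_in V X H" and S: "S \<subseteq> V" "card S = p"
    and SX: "card (S \<inter> X) \<le> 1"
    and kill0: "\<And>S. S \<subseteq> V \<Longrightarrow> op_apply V H zero_state S = 0"
    and killW: "\<And>S. S \<subseteq> V \<Longrightarrow> op_apply V H (Wp V 1) S = 0"
  shows "op_apply V H (Wp V p) S = 0"
proof -
  have "S \<inter> X \<subseteq> V" using S(1) by blast
  moreover have "card (S \<inter> X) = 0 \<or> card (S \<inter> X) = 1" using SX by linarith
  ultimately have "op_apply V H (Wp V (card (S \<inter> X))) (S \<inter> X) = 0"
    using kill0 killW op_apply_Wp_0[OF fV] by auto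
  with op_apply_Wp_supported_in[OF fV X S] show ?thesis by simp
qed

theorem proposition5:
  fixes V :: "'a set" and E :: "'a \<Rightarrow> 'a \<Rightarrow> bool" and Rmax p :: nat
    and h :: "'a set \<Rightarrow> 'a op" and E' :: complex
  assumes graph: "simple_graph V E"
    and R_pos: "Rmax > 0"
    and supp: "\<And>X. X \<subseteq> V \<Longrightarrow> diam E X \<le> enat Rmax \<Longrightarrow> supported_in V X (h X)"
    and killW: "\<And>X S. X \<subseteq> V \<Longrightarrow> diam E X \<le> enat Rmax \<Longrightarrow> S \<subseteq> V \<Longrightarrow>
                   op_apply V (h X) (Wp V 1) S = 0"
    and kill0: "\<And>X S. X \<subseteq> V \<Longrightarrow> diam E X \<le> enat Rmax \<Longrightarrow> S \<subseteq> V \<Longrightarrow>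
                   op_apply V (h X) zero_state S = 0"
    and p_le_N: "p \<le> card V"
    and p_bound: "real p \<le> real (card V) / (real (max_degree V E) ^ (2 * Rmax) + 1)"
    and eig: "\<And>S. S \<subseteq> V \<Longrightarrow>
       (\<Sum>X\<in>{X. X \<subseteq> V \<and> diam E X \<le> enat Rmax}. op_apply V (h X) (Wp V p) S) = E' * Wp V p S"
  shows "E' = 0"
proof -
  have fV: "finite V" using graph unfolding simple_graph_def by auto
  let ?\<Delta> = "max_degree V E"
  have "?\<Delta> ^ Rmax \<le> ?\<Delta> ^ (2 * Rmax)"
    using R_pos by (cases ?\<Delta>) (auto intro: power_increasing simp: zero_power)
  then have "p * (?\<Delta> ^ Rmax + 1) \<le> p * (?\<Delta> ^ (2 * Rmax) + 1)" by simp
  also have "\<dots> \<le> card V" using p_bound by (rule nat_mult_le_if_le_divide)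
  finally obtain S where S: "S \<subseteq> V" "card S = p"
    and sparse: "\<And>X. diam E X \<le> enat Rmax \<Longrightarrow> card (S \<inter> X) \<le> 1"
    using exists_sparse_vertex_set[OF graph R_pos] by blast
  have "op_apply V (h X) (Wp V p) S = 0" if X: "X \<subseteq> V" "diam E X \<le> enat Rmax" for X
    using op_apply_Wp_eq_0_if_card_Int_le_1[OF fV X(1) supp[OF X] S sparse[OF X(2)]
        kill0[OF X] killW[OF X]] .
  then have "E' * Wp V p S = 0" using eig[OF S(1)] by simp
  moreover have "Wp V p S \<noteq> 0" using S(2) p_le_N unfolding Wp_def by simp
  ultimately show ?thesis by simp
qed

end
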